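(* Let $n,m,n'$ be positive integers with $n\ge m$. Then $$\mu^*(n+n',m+1)\le \mu^*(n,m)+n'.$$
   Context: Let $\mathbb F_2=\{0,1\}$ be the field with two elements. For $u\in\mathbb F_2^n$, $|u|$ denotes the Hamming weight of $u$. A wiring on $n$ vertices is a matrix $W=(w_{i,j})\in M(n,n;\mathbb F_2)$ with $w_{i,i}=1$ for all $i$. The degree of vertex $j$ is the number of $1$s in the $j$th column of $W$. For $c\in\mathbb F_2^n$, $M(W,c)=\max\{|Wx+c| : x\in\mathbb F_2^n\}$. For $n\ge m\ge 1$, $A^*(n,m)$ is the set of wirings on $n$ vertices in which every vertex has degree exactly $m$, and $\mu^*(n,m)=\min\{M(W,0): W\in A^*(n,m)\}$. *)

theory Defs
  imports Main "HOL-Library.Z2"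
begin

text \<open>F_2 is the field \<open>bit\<close>. Vectors in F_2^n are functions nat => bit supported on {0..<n};
  n x n matrices are functions nat => nat => bit supported on {0..<n} x {0..<n}.\<close>

definition vecs :: "nat \<Rightarrow> (nat \<Rightarrow> bit) set" where
  "vecs n = {x. \<forall>j. n \<le> j \<longrightarrow> x j = 0}"

definition hweight :: "nat \<Rightarrow> (nat \<Rightarrow> bit) \<Rightarrow> nat" where
  "hweight n u = card {i. i < n \<and> u i \<noteq> 0}"

definition mat_vec :: "nat \<Rightarrow> (nat \<Rightarrow> nat \<Rightarrow> bit) \<Rightarrow> (nat \<Rightarrow> bit) \<Rightarrow> (nat \<Rightarrow> bit)" where
  "mat_vec n W x = (\<lambda>i. if i < n then (\<Sum>j<n. W i j * x j) else 0)"

definition is_matrix :: "nat \<Rightarrow> (nat \<Rightarrow> nat \<Rightarrow> bit) \<Rightarrow> bool" where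
  "is_matrix n W \<longleftrightarrow> (\<forall>i j. (n \<le> i \<or> n \<le> j) \<longrightarrow> W i j = 0)"

definition wiring :: "nat \<Rightarrow> (nat \<Rightarrow> nat \<Rightarrow> bit) \<Rightarrow> bool" where
  "wiring n W \<longleftrightarrow> is_matrix n W \<and> (\<forall>i<n. W i i = 1)"

definition degree :: "nat \<Rightarrow> (nat \<Rightarrow> nat \<Rightarrow> bit) \<Rightarrow> nat \<Rightarrow> nat" where
  "degree n W j = card {i. i < n \<and> W i j = 1}"

definition Mval :: "nat \<Rightarrow> (nat \<Rightarrow> nat \<Rightarrow> bit) \<Rightarrow> (nat \<Rightarrow> bit) \<Rightarrow> nat" where
  "Mval n W c = Max ((\<lambda>x. hweight n (\<lambda>i. mat_vec n W x i + c i)) ` vecs n)"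

definition Astar :: "nat \<Rightarrow> nat \<Rightarrow> (nat \<Rightarrow> nat \<Rightarrow> bit) set" where
  "Astar n m = {W. wiring n W \<and> (\<forall>j<n. degree n W j = m)}"

definition mu_star :: "nat \<Rightarrow> nat \<Rightarrow> nat" where
  "mu_star n m = Min ((\<lambda>W. Mval n W (\<lambda>_. 0)) ` Astar n m)"

end

theory Submission
  imports Defs
begin

text \<open>Extend an optimal wiring \<open>W \<in> A*(n,m)\<close> by \<open>k\<close> new vertices: each new column is
  column 0 of \<open>W\<close> plus its diagonal entry, and the first new vertex \<open>n\<close> receives an edge
  from every old vertex, so all degrees grow by one. For an input \<open>x\<close>, the new coordinates act
  on the old rows exactly like adding their sum to \<open>x 0\<close>; hence the old rows of the extended
  product form a vector \<open>Wz\<close>, of weight at most \<open>M(W)\<close>, and the \<open>k\<close> new rows add at most \<open>k\<close>.\<close>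

lemma hweight_le: "hweight n u \<le> n"
proof -
  have "{i. i < n \<and> u i \<noteq> 0} \<subseteq> {..<n}" by auto
  then have "card {i. i < n \<and> u i \<noteq> 0} \<le> card {..<n}" by (intro card_mono) auto
  then show ?thesis by (simp add: hweight_def)
qed

lemma finite_Mval_range: "finite ((\<lambda>x. hweight n (\<lambda>i. mat_vec n W x i + c i)) ` vecs n)"
  by (rule finite_subset[of _ "{..n}"]) (auto simp: hweight_le)

lemma Mval_le:
  assumes "\<And>x. x \<in> vecs n \<Longrightarrow> hweight n (\<lambda>i. mat_vec n W x i + c i) \<le> B"
  shows "Mval n W c \<le> B"
proof -
  have "(\<lambda>_. 0) \<in> vecs n" by (simp add: vecs_def)
  then show ?thesis
    unfolding Mval_def using finite_Mval_range[of n W c] assms by (intro Max.boundedI) auto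
qed

lemma hweight_le_Mval:
  assumes "x \<in> vecs n"
  shows "hweight n (\<lambda>i. mat_vec n W x i + c i) \<le> Mval n W c"
  unfolding Mval_def using finite_Mval_range[of n W c] assms by (intro Max_ge) auto

lemma finite_mu_star_range: "finite ((\<lambda>W. Mval n W (\<lambda>_. 0)) ` Astar n m)"
  by (rule finite_subset[of _ "{..n}"]) (auto intro!: Mval_le simp: hweight_le)

lemma mu_star_le_Mval: "W \<in> Astar n m \<Longrightarrow> mu_star n m \<le> Mval n W (\<lambda>_. 0)"
  unfolding mu_star_def using finite_mu_star_range by (intro Min_le) auto

lemma mu_star_attained:
  assumes "Astar n m \<noteq> {}"
  obtains W where "W \<in> Astar n m" and "mu_star n m = Mval n W (\<lambda>_. 0)"
proof -
  have "mu_star n m \<in> (\<lambda>W. Mval n W (\<lambda>_. 0)) ` Astar n m"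
    unfolding mu_star_def using finite_mu_star_range assms by (intro Min_in) auto
  then show ?thesis using that by auto
qed

text \<open>Witness: column \<open>j\<close> has its ones in the cyclic interval of rows \<open>j, \<dots>, j + m - 1 (mod n)\<close>.\<close>

lemma Astar_nonempty:
  assumes "1 \<le> m" "m \<le> n"
  shows "Astar n m \<noteq> {}"
proof -
  define W :: "nat \<Rightarrow> nat \<Rightarrow> bit" where
    "W = (\<lambda>i j. if i < n \<and> j < n \<and> ((j \<le> i \<and> i < j + m) \<or> i + n < j + m) then 1 else 0)"
  have "W \<in> Astar n m"
    unfolding Astar_def wiring_def is_matrix_def
  proof (intro CollectI conjI allI impI)
    fix i j assume "n \<le> i \<or> n \<le> j" then show "W i j = 0" by (auto simp: W_def)
  next
    fix i assume "i < n" then show "W i i = 1" using assms by (auto simp: W_def)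
  next
    fix j assume j: "j < n"
    have "{i. i < n \<and> W i j = 1} = {j..<min (j+m) n} \<union> {..<j+m-n}"
      using j assms by (auto simp: W_def)
    moreover have "{j..<min (j+m) n} \<inter> {..<j+m-n} = {}" using assms by auto
    ultimately have "card {i. i < n \<and> W i j = 1} = card {j..<min (j+m) n} + card {..<j+m-n}"
      by (simp add: card_Un_disjoint)
    also have "\<dots> = m" using j assms by auto
    finally show "degree n W j = m" by (simp add: degree_def)
  qed
  then show ?thesis by blast
qed

definition pad_wiring :: "nat \<Rightarrow> nat \<Rightarrow> (nat \<Rightarrow> nat \<Rightarrow> bit) \<Rightarrow> nat \<Rightarrow> nat \<Rightarrow> bit" where
  "pad_wiring n k W = (\<lambda>i j.
     if i < n \<and> j < n then W i j
     else if i < n \<and> n \<le> j \<and> j < n + k then W i 0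
     else if i = n \<and> j < n then 1
     else if n \<le> i \<and> i < n + k \<and> i = j then 1 else 0)"

definition fold_tail :: "nat \<Rightarrow> nat \<Rightarrow> (nat \<Rightarrow> bit) \<Rightarrow> nat \<Rightarrow> bit" where
  "fold_tail n k x = (\<lambda>j. if j < n then x j + (if j = 0 then (\<Sum>l\<in>{n..<n+k}. x l) else 0) else 0)"

lemma pad_wiring_in_Astar:
  assumes W: "W \<in> Astar n m" and "0 < n" and "0 < k"
  shows "pad_wiring n k W \<in> Astar (n + k) (m + 1)"
proof -
  have Wm: "is_matrix n W" "\<And>i. i < n \<Longrightarrow> W i i = 1" "\<And>j. j < n \<Longrightarrow> degree n W j = m"
    using W by (auto simp: Astar_def wiring_def)
  show ?thesis
    unfolding Astar_def wiring_def
  proof (intro CollectI conjI allI impI)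
    show "is_matrix (n + k) (pad_wiring n k W)"
      using Wm(1) assms by (auto simp: is_matrix_def pad_wiring_def)
  next
    fix i assume "i < n + k" then show "pad_wiring n k W i i = 1"
      using Wm(2) by (auto simp: pad_wiring_def)
  next
    fix j assume j: "j < n + k"
    show "degree (n + k) (pad_wiring n k W) j = m + 1"
    proof (cases "j < n")
      case True
      then have "{i. i < n + k \<and> pad_wiring n k W i j = 1} = insert n {i. i < n \<and> W i j = 1}"
        using assms by (auto simp: pad_wiring_def)
      then show ?thesis using Wm(3)[OF True] by (simp add: degree_def)
    next
      case False
      then have "{i. i < n + k \<and> pad_wiring n k W i j = 1} = insert j {i. i < n \<and> W i 0 = 1}"
        using j by (auto simp: pad_wiring_def)
      then show ?thesis using Wm(3)[OF \<open>0 < n\<close>] False by (simp add: degree_def)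
    qed
  qed
qed

lemma mat_vec_pad_wiring:
  assumes i: "i < n"
  shows "mat_vec (n + k) (pad_wiring n k W) x i = mat_vec n W (fold_tail n k x) i"
proof -
  define s where "s = (\<Sum>l\<in>{n..<n+k}. x l)"
  have lessThan_split: "{..<n + k} = {..<n} \<union> {n..<n+k}" by auto
  have "mat_vec (n + k) (pad_wiring n k W) x i
      = (\<Sum>j<n. pad_wiring n k W i j * x j) + (\<Sum>j\<in>{n..<n+k}. pad_wiring n k W i j * x j)"
    using i unfolding mat_vec_def lessThan_split
    by (simp only: trans_less_add1 if_True) (rule sum.union_disjoint, auto)
  also have "\<dots> = (\<Sum>j<n. W i j * x j) + (\<Sum>j\<in>{n..<n+k}. W i 0 * x j)"
    using i by (intro arg_cong2[where f = "(+)"] sum.cong) (auto simp: pad_wiring_def)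
  also have "\<dots> = (\<Sum>j<n. W i j * x j) + W i 0 * s"
    by (simp only: s_def sum_distrib_left)
  also have "W i 0 * s = (\<Sum>j<n. if j = 0 then W i j * s else 0)"
    using i by (simp only: sum.delta finite_lessThan lessThan_iff) auto
  also have "\<dots> = (\<Sum>j<n. W i j * (if j = 0 then s else 0))"
    by (rule sum.cong) auto
  also have "(\<Sum>j<n. W i j * x j) + \<dots> = (\<Sum>j<n. W i j * fold_tail n k x j)"
    unfolding sum.distrib[symmetric] distrib_left[symmetric]
    by (rule sum.cong) (simp_all only: fold_tail_def s_def lessThan_iff if_True)
  finally show ?thesis using i by (simp add: mat_vec_def)
qed

lemma Mval_pad_wiring_le: "Mval (n + k) (pad_wiring n k W) c \<le> Mval n W c + k"
proof (rule Mval_le)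
  fix x
  let ?Wx = "\<lambda>i. mat_vec (n + k) (pad_wiring n k W) x i + c i"
  let ?Wz = "\<lambda>i. mat_vec n W (fold_tail n k x) i + c i"
  have "{i. i < n + k \<and> ?Wx i \<noteq> 0} \<subseteq> {i. i < n \<and> ?Wz i \<noteq> 0} \<union> {n..<n+k}"
    using mat_vec_pad_wiring[of _ n k W x] by auto
  then have "hweight (n + k) ?Wx \<le> card ({i. i < n \<and> ?Wz i \<noteq> 0} \<union> {n..<n+k})"
    unfolding hweight_def by (intro card_mono) auto
  also have "\<dots> \<le> hweight n ?Wz + k"
    unfolding hweight_def using card_Un_le[of "{i. i < n \<and> ?Wz i \<noteq> 0}" "{n..<n+k}"] by simp
  also have "\<dots> \<le> Mval n W c + k"
    using hweight_le_Mval[of "fold_tail n k x" n W c] by (simp add: vecs_def fold_tail_def)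
  finally show "hweight (n + k) ?Wx \<le> Mval n W c + k" .
qed

theorem lemma5p2:
  fixes n m n' :: nat
  assumes "1 \<le> m" and "m \<le> n" and "1 \<le> n'"
  shows "mu_star (n + n') (m + 1) \<le> mu_star n m + n'"
proof -
  obtain W where W: "W \<in> Astar n m" and opt: "mu_star n m = Mval n W (\<lambda>_. 0)"
    using mu_star_attained Astar_nonempty[OF assms(1,2)] by blast
  have "pad_wiring n n' W \<in> Astar (n + n') (m + 1)"
    using pad_wiring_in_Astar[OF W] assms by simp
  then have "mu_star (n + n') (m + 1) \<le> Mval (n + n') (pad_wiring n n' W) (\<lambda>_. 0)"
    by (rule mu_star_le_Mval)
  also have "\<dots> \<le> mu_star n m + n'"
    using Mval_pad_wiring_le opt by simp
  finally show ?thesis .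
qed

end
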